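(* Let $n\ge 1$, let $C_u(v_1),\ldots,C_u(v_n)>0$ and $R_1,\ldots,R_n>0$ be sustainable, i.e. $R_i\le C_u(v_i)$ for all $i$, $\sum_{j\ne i}R_j\le C_d(v_i)$ for all $i$ (for some downlink capacities $C_d(v_i)>0$), and $(n-1)\sum_{i=1}^n R_i\le\sum_{i=1}^n C_u(v_i)$. Run the algorithm described in the context on these inputs. Then for every $\alpha$ with $1\le\alpha\le n$, $$\sum_{i=1}^n U_i[\alpha] \geq (n-2)\sum_{i=\alpha}^n R_i.$$
   Context: Sub-stream rate assigning algorithm. Input: $n$, uplink capacities $C_u(v_1),\ldots,C_u(v_n)$ and rates $R_1,\ldots,R_n$. Initialize $r_{i,j}:=0$ for all $1\le i,j\le n$ and $U_i := C_u(v_i)-R_i$ for $1\le i\le n$. Outer loop: for $i=1$ to $n$: set $R'_i := R_i$; inner loop: for $j=1$ to $n$: if $(n-2)R'_i > U_j$ then set $r_{i,j} := U_j/(n-2)$, else set $r_{i,j} := R'_i$; then set $U_j := U_j-(n-2)r_{i,j}$ and $R'_i := R'_i - r_{i,j}$; if $R'_i = 0$, exit the inner loop. Output all $r_{i,j}$. Notation: $U_i[\alpha]$ denotes the value of the variable $U_i$ at the start of iteration $\alpha$ of the outer loop. *)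

theory Defs
  imports Complex_Main
begin

text \<open>Inner loop of the sub-stream rate assigning algorithm.
  inner_loop n j k U R' row: process indices j, j+1, ..., j+k-1 (k = remaining iterations),
  with current uplink residuals U, remaining rate R' and current row r_{i,.}.\<close>
fun inner_loop :: "nat \<Rightarrow> nat \<Rightarrow> nat \<Rightarrow> (nat \<Rightarrow> real) \<Rightarrow> real \<Rightarrow> (nat \<Rightarrow> real)
    \<Rightarrow> (nat \<Rightarrow> real) \<times> real \<times> (nat \<Rightarrow> real)" where
  "inner_loop n j 0 U R' row = (U, R', row)"
| "inner_loop n j (Suc k) U R' row =
     (let x = (if (real n - 2) * R' > U j then U j / (real n - 2) else R');
          U' = U(j := U j - (real n - 2) * x);
          R'' = R' - x;
          row' = row(j := x)
      in if R'' = 0 then (U', R'', row') else inner_loop n (Suc j) k U' R'' row')"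

text \<open>alg_state n Cu R k = (U, r) after k iterations of the outer loop;
  U is indexed by 1..n, r by (i,j) with 1 \<le> i,j \<le> n.\<close>
fun alg_state :: "nat \<Rightarrow> (nat \<Rightarrow> real) \<Rightarrow> (nat \<Rightarrow> real) \<Rightarrow> nat
    \<Rightarrow> (nat \<Rightarrow> real) \<times> (nat \<Rightarrow> nat \<Rightarrow> real)" where
  "alg_state n Cu R 0 = ((\<lambda>i. Cu i - R i), (\<lambda>i j. 0))"
| "alg_state n Cu R (Suc k) =
     (let (U, r) = alg_state n Cu R k;
          (U', _, row) = inner_loop n 1 n U (R (Suc k)) (\<lambda>_. 0)
      in (U', r(Suc k := row)))"

text \<open>U_i[alpha]: value of U_i at the start of iteration alpha of the outer loop (alpha \<ge> 1).\<close>
definition U_at :: "nat \<Rightarrow> (nat \<Rightarrow> real) \<Rightarrow> (nat \<Rightarrow> real) \<Rightarrow> nat \<Rightarrow> nat \<Rightarrow> real" where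
  "U_at n Cu R \<alpha> i = fst (alg_state n Cu R (\<alpha> - 1)) i"

end

theory Submission
  imports Defs
begin

text \<open>Every assignment of the inner loop moves (n - 2) r_{i,j} units from the residual
  uplink capacities U_j to the already allocated part of R_i, so the quantity
  \<open>\<Sum>U - (n - 2) R'\<close> is invariant along the inner loop. Since the loop never
  allocates more than R_i (the remaining rate R' stays nonnegative), one outer iteration lowers
  \<open>\<Sum>U\<close> by at most (n - 2) R_i. Starting from
  \<open>\<Sum>U[1] = \<Sum>C_u - \<Sum>R \<ge> (n - 2) \<Sum>R\<close>, induction on the outer loop gives the bound.\<close>

lemma sum_fun_upd_minus:
  fixes U :: "'a \<Rightarrow> 'b :: ab_group_add"
  assumes "finite S" "j \<in> S"
  shows "sum (U(j := U j - d)) S = sum U S - d"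
proof -
  have "sum (U(j := U j - d)) (S - {j}) = sum U (S - {j})"
    by (rule sum.cong) auto
  then show ?thesis
    using sum.remove[OF assms, of U] sum.remove[OF assms, of "U(j := U j - d)"] by simp
qed

text \<open>For c = 0 (that is, n = 2) the first branch is the junk value u / 0 = 0.\<close>

lemma assigned_rate_le:
  fixes c u R' :: real
  assumes "c \<ge> 0" "R' \<ge> 0"
  shows "(if c * R' > u then u / c else R') \<le> R'"
proof (cases "c * R' > u \<and> c > 0")
  case True
  then show ?thesis by (simp add: divide_le_eq mult.commute)
qed (use assms in auto)

lemma inner_loop_Suc_unfold:
  fixes n j k :: nat and U row :: "nat \<Rightarrow> real" and R' :: real
  defines "x \<equiv> (if (real n - 2) * R' > U j then U j / (real n - 2) else R')"
  shows "inner_loop n j (Suc k) U R' row =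
    (if R' - x = 0 then (U(j := U j - (real n - 2) * x), R' - x, row(j := x))
     else inner_loop n (Suc j) k (U(j := U j - (real n - 2) * x)) (R' - x) (row(j := x)))"
  by (simp only: inner_loop.simps Let_def x_def)

lemma inner_loop_sum_invariant:
  assumes "finite S" "{j..<j+k} \<subseteq> S"
  shows "sum (fst (inner_loop n j k U R' row)) S
           - (real n - 2) * fst (snd (inner_loop n j k U R' row))
         = sum U S - (real n - 2) * R'"
  using assms(2)
proof (induction k arbitrary: j U R' row)
  case 0
  then show ?case by simp
next
  case (Suc k)
  define x where "x = (if (real n - 2) * R' > U j then U j / (real n - 2) else R')"
  have "j \<in> S"
    using Suc.prems by auto
  then have "sum (U(j := U j - (real n - 2) * x)) S - (real n - 2) * (R' - x)
        = sum U S - (real n - 2) * R'"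
    using sum_fun_upd_minus[OF assms(1), of j U "(real n - 2) * x"] by (simp add: algebra_simps)
  moreover have "{Suc j..<Suc j + k} \<subseteq> S"
    using Suc.prems by auto
  ultimately show ?case
    using Suc.IH inner_loop_Suc_unfold[of n j k U R' row, folded x_def] by auto
qed

lemma inner_loop_remaining_rate_nonneg:
  assumes "n \<ge> 2" "R' \<ge> 0"
  shows "fst (snd (inner_loop n j k U R' row)) \<ge> 0"
  using assms(2)
proof (induction k arbitrary: j U R' row)
  case 0
  then show ?case by simp
next
  case (Suc k)
  define x where "x = (if (real n - 2) * R' > U j then U j / (real n - 2) else R')"
  have "R' - x \<ge> 0"
    using assigned_rate_le[of "real n - 2" R' "U j"] assms(1) Suc.prems by (simp add: x_def)
  then show ?case
    using Suc.IH inner_loop_Suc_unfold[of n j k U R' row, folded x_def] by auto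
qed

lemma alg_state_Suc_sum_ge:
  assumes "n \<ge> 2" "R (Suc k) \<ge> 0"
  shows "(\<Sum>i=1..n. fst (alg_state n Cu R (Suc k)) i)
           \<ge> (\<Sum>i=1..n. fst (alg_state n Cu R k) i) - (real n - 2) * R (Suc k)"
proof -
  obtain U r where state: "alg_state n Cu R k = (U, r)"
    by fastforce
  obtain U' R' row where loop: "inner_loop n 1 n U (R (Suc k)) (\<lambda>_. 0) = (U', R', row)"
    by (metis prod.exhaust)
  have "{1..<1+n} \<subseteq> {1..n}"
    by auto
  then have "sum U' {1..n} - (real n - 2) * R' = sum U {1..n} - (real n - 2) * R (Suc k)"
    using inner_loop_sum_invariant[of "{1..n}" 1 n n U "R (Suc k)" "\<lambda>_. 0"] loop by simp
  moreover have "(real n - 2) * R' \<ge> 0"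
    using inner_loop_remaining_rate_nonneg[OF assms, of 1 n U "\<lambda>_. 0"] loop assms(1) by simp
  moreover have "fst (alg_state n Cu R (Suc k)) = U'" "fst (alg_state n Cu R k) = U"
    using state loop by simp_all
  ultimately show ?thesis
    by simp
qed

lemma alg_state_sum_ge:
  assumes "\<forall>i\<in>{1..n}. R i \<ge> 0"
    and "(real n - 1) * (\<Sum>i=1..n. R i) \<le> (\<Sum>i=1..n. Cu i)"
    and "k < n"
  shows "(\<Sum>i=1..n. fst (alg_state n Cu R k) i) \<ge> (real n - 2) * (\<Sum>i=Suc k..n. R i)"
  using assms(3)
proof (induction k)
  case 0
  have "(\<Sum>i=1..n. fst (alg_state n Cu R 0) i) = (\<Sum>i=1..n. Cu i) - (\<Sum>i=1..n. R i)"
    by (simp add: sum_subtractf)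
  then show ?case
    using assms(2) by (simp add: algebra_simps)
next
  case (Suc k)
  have "(\<Sum>i=Suc k..n. R i) = R (Suc k) + (\<Sum>i=Suc (Suc k)..n. R i)"
    using Suc.prems by (simp add: sum.atLeast_Suc_atMost)
  moreover have "(\<Sum>i=1..n. fst (alg_state n Cu R (Suc k)) i)
                   \<ge> (\<Sum>i=1..n. fst (alg_state n Cu R k) i) - (real n - 2) * R (Suc k)"
    using alg_state_Suc_sum_ge assms(1) Suc.prems by simp
  ultimately show ?case
    using Suc by (simp add: algebra_simps)
qed

theorem propositionB2:
  fixes n :: nat and Cu Cd R :: "nat \<Rightarrow> real"
  assumes "n \<ge> 1"
    and "\<forall>i\<in>{1..n}. Cu i > 0"
    and "\<forall>i\<in>{1..n}. Cd i > 0"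
    and "\<forall>i\<in>{1..n}. R i > 0"
    and "\<forall>i\<in>{1..n}. R i \<le> Cu i"
    and "\<forall>i\<in>{1..n}. (\<Sum>j\<in>{1..n} - {i}. R j) \<le> Cd i"
    and "(real n - 1) * (\<Sum>i=1..n. R i) \<le> (\<Sum>i=1..n. Cu i)"
  shows "\<forall>\<alpha>\<in>{1..n}. (\<Sum>i=1..n. U_at n Cu R \<alpha> i) \<ge> (real n - 2) * (\<Sum>i=\<alpha>..n. R i)"
proof
  fix \<alpha> assume "\<alpha> \<in> {1..n}"
  then have "\<alpha> - 1 < n" "Suc (\<alpha> - 1) = \<alpha>"
    by auto
  moreover have "\<forall>i\<in>{1..n}. R i \<ge> 0"
    using assms(4) by auto
  ultimately show "(\<Sum>i=1..n. U_at n Cu R \<alpha> i) \<ge> (real n - 2) * (\<Sum>i=\<alpha>..n. R i)"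
    using alg_state_sum_ge[of n R Cu "\<alpha> - 1"] assms(7) by (simp add: U_at_def)
qed

end
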